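(* Let $d\ge2$ and let $v=(v_1,\dots,v_d)\in\mathbb{R}^d$ satisfy $\sum_j v_j=1$ and $\sum_j v_j^2=d$. Let $v_{\max}=\max_j v_j$, $v_{\min}=\min_j v_j$, $\|v\|_1=\sum_j|v_j|$. Then $$\tfrac12\bigl[v_{\max}(\|v\|_1-1)+|v_{\min}|(\|v\|_1+1)\bigr]\ge d-\sqrt{d+1}+\tfrac2d\sqrt{d+1}-\tfrac2d,$$ with equality if and only if the components of $v$ arranged in nonincreasing order $v^\downarrow$ satisfy $$v^\downarrow_1=\frac{(d-1)\sqrt{d+1}+1}{d},\qquad v^\downarrow_2=\dots=v^\downarrow_d=\frac{1-\sqrt{d+1}}{d}.$$ *)

theory Defs
  imports "HOL-Analysis.Analysis"
begin

end

theory Submission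
  imports Defs
begin

text \<open>
  Let \<open>a = v\<^sub>m\<^sub>a\<^sub>x\<close>, \<open>c = v\<^sub>m\<^sub>i\<^sub>n\<close> and \<open>p = a + c\<close>. Every entry satisfies
  \<open>v\<^sub>k\<^sup>2 \<le> ((a - c)\<bar>v\<^sub>k\<bar> + (a + c)v\<^sub>k)/2\<close>, the right side being \<open>a v\<^sub>k\<close> or \<open>c v\<^sub>k\<close>
  according to the sign of \<open>v\<^sub>k\<close>;
  summing gives \<open>d \<le> ((a - c)\<parallel>v\<parallel>\<^sub>1 + p)/2\<close>, whence the left-hand side is at least \<open>d - p\<close>.
  On the remaining \<open>d - 2\<close> entries, Cauchy-Schwarz and \<open>(v\<^sub>k - c)(a - v\<^sub>k) \<ge> 0\<close>
  combine into \<open>d p\<^sup>2 - 4p + 3d - d\<^sup>2 \<le> 0\<close>, i.e. \<open>p \<le> ((d - 2)\<surd>(d + 1) + 2)/d\<close>.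
  Equality forces both inequalities on the remaining entries to be tight, so all of them
  equal \<open>c\<close>; the two constraints then determine \<open>a\<close> and \<open>c\<close>.
\<close>

lemma sq_le_max_min_combination:
  fixes a c x :: real
  assumes "c \<le> x" "x \<le> a"
  shows "x\<^sup>2 \<le> ((a - c) * \<bar>x\<bar> + (a + c) * x) / 2"
proof (cases "0 \<le> x")
  case True
  then show ?thesis
    using mult_right_mono[OF assms(2) True] by (simp add: power2_eq_square algebra_simps)
next
  case False
  then show ?thesis
    using mult_right_mono_neg[OF assms(1), of x] by (simp add: power2_eq_square algebra_simps)
qed

lemma sq_eq_max_min_combination:
  fixes a c x :: real
  assumes "c \<le> 0" "0 \<le> a" "x = a \<or> x = c"
  shows "x\<^sup>2 = ((a - c) * \<bar>x\<bar> + (a + c) * x) / 2"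
  using assms by (auto simp: power2_eq_square algebra_simps)

lemma sum_max_min_combination:
  fixes x :: "'a \<Rightarrow> real"
  shows "(\<Sum>k\<in>A. ((a - c) * \<bar>x k\<bar> + (a + c) * x k) / 2)
           = ((a - c) * (\<Sum>k\<in>A. \<bar>x k\<bar>) + (a + c) * (\<Sum>k\<in>A. x k)) / 2"
  by (simp add: sum_divide_distrib[symmetric] sum.distrib sum_distrib_left)

lemma sum_sq_le_max_min_combination:
  fixes x :: "'a \<Rightarrow> real"
  assumes "\<And>k. k \<in> A \<Longrightarrow> c \<le> x k \<and> x k \<le> a"
  shows "(\<Sum>k\<in>A. (x k)\<^sup>2) \<le> ((a - c) * (\<Sum>k\<in>A. \<bar>x k\<bar>) + (a + c) * (\<Sum>k\<in>A. x k)) / 2"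
  unfolding sum_max_min_combination[symmetric]
  using assms by (intro sum_mono sq_le_max_min_combination) auto

lemma sum_sq_eq_max_min_combination:
  fixes x :: "'a \<Rightarrow> real"
  assumes "c \<le> 0" "0 \<le> a" "\<And>k. k \<in> A \<Longrightarrow> x k = a \<or> x k = c"
  shows "(\<Sum>k\<in>A. (x k)\<^sup>2) = ((a - c) * (\<Sum>k\<in>A. \<bar>x k\<bar>) + (a + c) * (\<Sum>k\<in>A. x k)) / 2"
  unfolding sum_max_min_combination[symmetric]
  using assms by (intro sum.cong sq_eq_max_min_combination) auto

lemma sum_sq_deviation_eq:
  fixes x :: "'a \<Rightarrow> real" and A :: "'a set"
  defines "m \<equiv> real (card A)"
  shows "(\<Sum>k\<in>A. (m * x k - (\<Sum>l\<in>A. x l))\<^sup>2)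
           = m * (m * (\<Sum>k\<in>A. (x k)\<^sup>2) - (\<Sum>k\<in>A. x k)\<^sup>2)"
proof -
  define S where "S = (\<Sum>l\<in>A. x l)"
  have "(\<Sum>k\<in>A. (m * x k - S)\<^sup>2) = (\<Sum>k\<in>A. m\<^sup>2 * (x k)\<^sup>2 - (2 * m * S) * x k + S\<^sup>2)"
    by (rule sum.cong) (auto simp: power2_eq_square algebra_simps)
  also have "\<dots> = m\<^sup>2 * (\<Sum>k\<in>A. (x k)\<^sup>2) - (2 * m * S) * S + m * S\<^sup>2"
    by (simp add: sum_subtractf sum.distrib sum_distrib_left S_def m_def)
  finally show ?thesis
    unfolding S_def by (simp add: power2_eq_square algebra_simps)
qed

lemma card_mult_sum_sq_eq_imp_constant:
  fixes x :: "'a \<Rightarrow> real"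
  assumes "finite A" "real (card A) * (\<Sum>k\<in>A. (x k)\<^sup>2) = (\<Sum>k\<in>A. x k)\<^sup>2"
    and "k \<in> A" "l \<in> A"
  shows "x k = x l"
proof -
  define m where "m = real (card A)"
  define S where "S = (\<Sum>l\<in>A. x l)"
  have "(\<Sum>k\<in>A. (m * x k - S)\<^sup>2) = 0"
    using sum_sq_deviation_eq[of A x] assms(2) unfolding m_def S_def by simp
  then have "\<forall>k\<in>A. m * x k = S"
    using assms(1) by (subst (asm) sum_nonneg_eq_0_iff) auto
  moreover have "m \<noteq> 0"
    using assms(1,3) unfolding m_def by auto
  ultimately show ?thesis
    using assms(3,4) by (metis mult_left_cancel)
qed

lemma sum_between_product_eq:
  fixes x :: "'a \<Rightarrow> real"
  shows "(\<Sum>k\<in>A. (x k - c) * (a - x k))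
           = (a + c) * (\<Sum>k\<in>A. x k) - (\<Sum>k\<in>A. (x k)\<^sup>2) - real (card A) * (a * c)"
proof -
  have "(\<Sum>k\<in>A. (x k - c) * (a - x k)) = (\<Sum>k\<in>A. (a + c) * x k - (x k)\<^sup>2 - a * c)"
    by (rule sum.cong) (auto simp: power2_eq_square algebra_simps)
  then show ?thesis
    by (simp add: sum_subtractf sum_distrib_left)
qed

lemma sum_one_exception:
  fixes x :: "'a \<Rightarrow> real" and f :: "real \<Rightarrow> real"
  assumes "finite A" "i \<in> A" "\<And>k. k \<in> A \<Longrightarrow> k \<noteq> i \<Longrightarrow> x k = c"
  shows "(\<Sum>k\<in>A. f (x k)) = f (x i) + (real (card A) - 1) * f c"
proof -
  have "(\<Sum>k\<in>A. f (x k)) = f (x i) + (\<Sum>k\<in>A - {i}. f (x k))"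
    using assms(1,2) by (rule sum.remove)
  also have "(\<Sum>k\<in>A - {i}. f (x k)) = (\<Sum>k\<in>A - {i}. f c)"
    using assms(3) by (intro sum.cong) auto
  also have "\<dots> = (real (card A) - 1) * f c"
  proof -
    have "1 \<le> card A"
      using assms(1,2) by (auto simp: Suc_le_eq card_gt_0_iff)
    then show ?thesis
      using assms(1,2) by (simp add: card_Diff_singleton of_nat_diff)
  qed
  finally show ?thesis .
qed

lemma quadratic_larger_root:
  fixes d :: real
  assumes "0 < d"
  defines "B \<equiv> ((d - 2) * sqrt (d + 1) + 2) / d"
  shows "d * B\<^sup>2 - 4 * B + 3 * d - d\<^sup>2 = 0"
proof -
  define s where "s = sqrt (d + 1)"
  have s2: "s\<^sup>2 = d + 1"
    unfolding s_def using assms by simp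
  have "d * (d * B\<^sup>2 - 4 * B + 3 * d - d\<^sup>2) = ((d - 2) * s + 2)\<^sup>2 - 4 * ((d - 2) * s + 2) + 3 * d\<^sup>2 - d ^ 3"
    unfolding B_def s_def[symmetric] using assms by (simp add: field_simps power2_eq_square power3_eq_cube)
  also have "\<dots> = (d - 2)\<^sup>2 * s\<^sup>2 - d ^ 3 + 3 * d\<^sup>2 - 4"
    by (simp add: power2_eq_square power3_eq_cube algebra_simps)
  also have "\<dots> = 0"
    unfolding s2 by (simp add: power2_eq_square power3_eq_cube algebra_simps)
  finally show ?thesis
    using assms by simp
qed

lemma le_quadratic_larger_root:
  fixes d p :: real
  assumes "2 \<le> d" "d * p\<^sup>2 - 4 * p + 3 * d - d\<^sup>2 \<le> 0"
  shows "p \<le> ((d - 2) * sqrt (d + 1) + 2) / d"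
proof -
  define s where "s = sqrt (d + 1)"
  have s2: "s\<^sup>2 = d + 1"
    unfolding s_def using assms(1) by simp
  have "(d * p - 2)\<^sup>2 - ((d - 2) * s)\<^sup>2 = d * (d * p\<^sup>2 - 4 * p + 3 * d - d\<^sup>2)"
    unfolding power_mult_distrib s2 by (simp add: power2_eq_square algebra_simps)
  also have "\<dots> \<le> 0"
    using assms by (intro mult_nonneg_nonpos) auto
  finally have "(d * p - 2)\<^sup>2 \<le> ((d - 2) * s)\<^sup>2"
    by simp
  moreover have "0 \<le> (d - 2) * s"
    using assms(1) unfolding s_def by simp
  ultimately have "d * p - 2 \<le> (d - 2) * s"
    by (rule power2_le_imp_le)
  then show ?thesis
    using assms(1) unfolding s_def by (simp add: pos_le_divide_eq mult.commute)
qed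

lemma two_valued_solution:
  fixes a c d :: real
  assumes "2 \<le> d" "c \<le> a" "a + (d - 1) * c = 1" "a\<^sup>2 + (d - 1) * c\<^sup>2 = d"
  shows "a = ((d - 1) * sqrt (d + 1) + 1) / d" and "c = (1 - sqrt (d + 1)) / d"
proof -
  have a: "a = 1 - (d - 1) * c"
    using assms(3) by simp
  have "(d - 1) * (d * c\<^sup>2 - 2 * c - 1) = 0"
    using assms(4) unfolding a by (simp add: power2_eq_square algebra_simps)
  then have "d * c\<^sup>2 - 2 * c = 1"
    using assms(1) by simp
  moreover have "(a - c)\<^sup>2 = 1 + d * (d * c\<^sup>2 - 2 * c)"
    unfolding a by (simp add: power2_eq_square algebra_simps)
  ultimately have "(a - c)\<^sup>2 = d + 1"
    by simp
  then have "a - c = sqrt (d + 1)"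
    using assms(2) by (metis abs_of_nonneg diff_ge_0_iff_ge real_sqrt_abs)
  then have dc: "d * c = 1 - sqrt (d + 1)"
    unfolding a by (simp add: algebra_simps)
  then show "c = (1 - sqrt (d + 1)) / d"
    using assms(1) by (simp add: field_simps)
  have "d * a = d - (d - 1) * (d * c)"
    unfolding a by (simp add: algebra_simps)
  also have "\<dots> = (d - 1) * sqrt (d + 1) + 1"
    unfolding dc by (simp add: algebra_simps)
  finally show "a = ((d - 1) * sqrt (d + 1) + 1) / d"
    using assms(1) by (simp add: field_simps)
qed

lemma sum_sq_ne_card_if_constant:
  fixes x :: "'a \<Rightarrow> real"
  assumes "2 \<le> card A" "\<And>k. k \<in> A \<Longrightarrow> x k = c" "(\<Sum>k\<in>A. x k) = 1"
  shows "(\<Sum>k\<in>A. (x k)\<^sup>2) \<noteq> real (card A)"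
proof
  assume "(\<Sum>k\<in>A. (x k)\<^sup>2) = real (card A)"
  moreover have "(\<Sum>k\<in>A. (x k)\<^sup>2) = real (card A) * c\<^sup>2"
    using assms(2) by simp
  moreover have "0 < card A"
    using assms(1) by simp
  ultimately have "\<bar>c\<bar> = 1"
    by (simp add: abs_square_eq_1)
  moreover have "real (card A) * c = 1"
    using assms(2,3) by simp
  ultimately have "real (card A) = 1"
    by (metis abs_mult abs_of_nat mult.right_neutral abs_one)
  then show False
    using assms(1) by simp
qed

lemma max_min_indices:
  fixes x :: "'a::finite \<Rightarrow> real"
  assumes "2 \<le> CARD('a)" "(\<Sum>k\<in>UNIV. x k) = 1" "(\<Sum>k\<in>UNIV. (x k)\<^sup>2) = real CARD('a)"
  obtains i j where "i \<noteq> j" "x i = Max (range x)" "x j = Min (range x)"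
proof -
  have fin: "finite (range x)" and ne: "range x \<noteq> {}"
    by simp_all
  obtain i j where i: "x i = Max (range x)" and j: "x j = Min (range x)"
    using Max_in[OF fin ne] Min_in[OF fin ne] by (metis imageE)
  have "i \<noteq> j"
  proof
    assume "i = j"
    moreover have "x k \<le> Max (range x)" "Min (range x) \<le> x k" for k
      using fin by simp_all
    ultimately have "x k = x i" for k
      using i j by (metis antisym)
    then show False
      using sum_sq_ne_card_if_constant[of UNIV x "x i"] assms by simp
  qed
  with i j that show ?thesis
    by blast
qed

context
  fixes x :: "'a \<Rightarrow> real" and A :: "'a set" and i j :: 'a
  assumes finite: "finite A" and i: "i \<in> A" and j: "j \<in> A" and "i \<noteq> j"
    and bounds: "\<And>k. k \<in> A \<Longrightarrow> x j \<le> x k \<and> x k \<le> x i"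
    and sum_eq: "(\<Sum>k\<in>A. x k) = 1"
    and sum_sq_eq: "(\<Sum>k\<in>A. (x k)\<^sup>2) = real (card A)"
begin

lemma two_le_card: "2 \<le> card A"
proof -
  have "card {i, j} \<le> card A"
    using finite i j by (intro card_mono) auto
  then show ?thesis
    using \<open>i \<noteq> j\<close> by simp
qed

lemma one_le_card_mult_max: "1 \<le> real (card A) * x i"
proof -
  have "(\<Sum>k\<in>A. x k) \<le> (\<Sum>k\<in>A. x i)"
    using bounds by (intro sum_mono) auto
  then show ?thesis
    using sum_eq by simp
qed

lemma min_negative: "x j < 0"
proof (rule ccontr)
  assume "\<not> x j < 0"
  then have nonneg: "0 \<le> x k" if "k \<in> A" for k
    using bounds[OF that] by linarith
  have "real (card A) = (\<Sum>k\<in>A. (x k)\<^sup>2)"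
    using sum_sq_eq ..
  also have "\<dots> \<le> (\<Sum>k\<in>A. x i * x k)"
    using bounds nonneg by (intro sum_mono) (auto simp: power2_eq_square intro: mult_right_mono)
  also have "\<dots> = x i"
    using sum_eq by (simp flip: sum_distrib_left)
  finally have "real (card A) \<le> x i" .
  then have "(real (card A))\<^sup>2 \<le> (x i)\<^sup>2"
    by (intro power_mono) simp_all
  also have "(x i)\<^sup>2 \<le> real (card A)"
    using member_le_sum[OF i, of "\<lambda>k. (x k)\<^sup>2"] finite sum_sq_eq by simp
  finally have "real (card A) * real (card A) \<le> real (card A) * 1"
    by (simp add: power2_eq_square)
  then show False
    using two_le_card by simp
qed

lemma max_min_objective_ge:
  defines "n1 \<equiv> \<Sum>k\<in>A. \<bar>x k\<bar>"
  shows "real (card A) - (x i + x j) \<le> (x i * (n1 - 1) + \<bar>x j\<bar> * (n1 + 1)) / 2"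
proof -
  have "real (card A) \<le> ((x i - x j) * n1 + (x i + x j)) / 2"
    using sum_sq_le_max_min_combination[where A = A and x = x and c = "x j" and a = "x i"] bounds sum_eq sum_sq_eq
    unfolding n1_def by simp
  moreover have "- x j * (n1 + 1) \<le> \<bar>x j\<bar> * (n1 + 1)"
    unfolding n1_def by (intro mult_right_mono) (auto simp: sum_nonneg)
  ultimately show ?thesis
    by (simp add: algebra_simps)
qed

lemma max_min_objective_eq_if_two_valued:
  defines "n1 \<equiv> \<Sum>k\<in>A. \<bar>x k\<bar>"
  assumes "\<And>k. k \<in> A \<Longrightarrow> k \<noteq> i \<Longrightarrow> x k = x j"
  shows "(x i * (n1 - 1) + \<bar>x j\<bar> * (n1 + 1)) / 2 = real (card A) - (x i + x j)"
proof -
  have "0 < real (card A) * x i"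
    using one_le_card_mult_max by linarith
  then have "0 \<le> x i"
    by (simp add: zero_less_mult_iff)
  moreover have "x k = x i \<or> x k = x j" if "k \<in> A" for k
    using assms(2) that by blast
  ultimately have "(\<Sum>k\<in>A. (x k)\<^sup>2) = ((x i - x j) * n1 + (x i + x j) * (\<Sum>k\<in>A. x k)) / 2"
    unfolding n1_def using min_negative by (intro sum_sq_eq_max_min_combination) auto
  then have "real (card A) = ((x i - x j) * n1 + (x i + x j)) / 2"
    unfolding sum_eq sum_sq_eq by simp
  then show ?thesis
    using min_negative by (simp add: field_simps)
qed

lemma card_remainder: "real (card (A - {i, j})) = real (card A) - 2"
  using two_le_card finite i j \<open>i \<noteq> j\<close> by (simp add: card_Diff_subset of_nat_diff)

lemma three_le_card:
  assumes "A - {i, j} \<noteq> {}"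
  shows "3 \<le> real (card A)"
proof -
  have "1 \<le> real (card (A - {i, j}))"
    using finite assms by (auto simp: Suc_le_eq card_gt_0_iff)
  then show ?thesis
    unfolding card_remainder by simp
qed

lemma sum_remainder:
  fixes f :: "real \<Rightarrow> real"
  shows "(\<Sum>k\<in>A - {i, j}. f (x k)) = (\<Sum>k\<in>A. f (x k)) - f (x i) - f (x j)"
  using finite i j \<open>i \<noteq> j\<close> by (simp add: sum_diff)

text \<open>The weights \<open>d\<close> and \<open>2(d - 2)\<close> are chosen so that the product \<open>a c\<close> cancels.\<close>
lemma max_min_quadratic_identity:
  defines "d \<equiv> real (card A)" and "a \<equiv> x i" and "c \<equiv> x j" and "R \<equiv> A - {i, j}"
  shows "(d - 1) * (d * (a + c)\<^sup>2 - 4 * (a + c) + 3 * d - d\<^sup>2)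
           = - d * (real (card R) * (\<Sum>k\<in>R. (x k)\<^sup>2) - (\<Sum>k\<in>R. x k)\<^sup>2)
             - 2 * (d - 2) * (\<Sum>k\<in>R. (x k - c) * (a - x k))"
proof -
  have S: "(\<Sum>k\<in>R. x k) = 1 - a - c" and Q: "(\<Sum>k\<in>R. (x k)\<^sup>2) = d - a\<^sup>2 - c\<^sup>2"
    using sum_remainder[of "\<lambda>t. t"] sum_remainder[of "\<lambda>t. t\<^sup>2"] sum_eq sum_sq_eq
    unfolding a_def c_def d_def R_def by simp_all
  show ?thesis
    unfolding sum_between_product_eq S Q
    unfolding R_def card_remainder d_def[symmetric]
    by (simp add: power2_eq_square algebra_simps)
qed

lemma remainder_terms_nonneg:
  defines "R \<equiv> A - {i, j}"
  shows "0 \<le> real (card R) * (\<Sum>k\<in>R. (x k)\<^sup>2) - (\<Sum>k\<in>R. x k)\<^sup>2"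
    and "0 \<le> (\<Sum>k\<in>R. (x k - x j) * (x i - x k))"
  using sum_squared_le_sum_of_squares[of x R] bounds
  by (auto simp: R_def mult.commute intro!: sum_nonneg mult_nonneg_nonneg)

lemma max_plus_min_le:
  defines "d \<equiv> real (card A)"
  shows "x i + x j \<le> ((d - 2) * sqrt (d + 1) + 2) / d"
proof (rule le_quadratic_larger_root)
  show "2 \<le> d"
    using two_le_card unfolding d_def by simp
  then have "0 \<le> d * (real (card (A - {i, j})) * (\<Sum>k\<in>A - {i, j}. (x k)\<^sup>2) - (\<Sum>k\<in>A - {i, j}. x k)\<^sup>2)"
    and "0 \<le> 2 * (d - 2) * (\<Sum>k\<in>A - {i, j}. (x k - x j) * (x i - x k))"
    using remainder_terms_nonneg by simp_all
  then have "(d - 1) * (d * (x i + x j)\<^sup>2 - 4 * (x i + x j) + 3 * d - d\<^sup>2) \<le> 0"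
    unfolding d_def max_min_quadratic_identity by simp
  with \<open>2 \<le> d\<close> show "d * (x i + x j)\<^sup>2 - 4 * (x i + x j) + 3 * d - d\<^sup>2 \<le> 0"
    by (simp add: mult_le_0_iff)
qed

lemma remainder_terms_vanish:
  defines "d \<equiv> real (card A)" and "R \<equiv> A - {i, j}"
  assumes root: "x i + x j = ((d - 2) * sqrt (d + 1) + 2) / d" and "R \<noteq> {}"
  shows "real (card R) * (\<Sum>k\<in>R. (x k)\<^sup>2) = (\<Sum>k\<in>R. x k)\<^sup>2"
    and "(\<Sum>k\<in>R. (x k - x j) * (x i - x k)) = 0"
proof -
  define V where "V = real (card R) * (\<Sum>k\<in>R. (x k)\<^sup>2) - (\<Sum>k\<in>R. x k)\<^sup>2"
  define \<sigma> where "\<sigma> = (\<Sum>k\<in>R. (x k - x j) * (x i - x k))"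
  have d3: "3 \<le> d"
    using three_le_card \<open>R \<noteq> {}\<close> unfolding d_def R_def by blast
  have "d * (x i + x j)\<^sup>2 - 4 * (x i + x j) + 3 * d - d\<^sup>2 = 0"
    unfolding root using d3 by (intro quadratic_larger_root) simp
  then have "d * V + 2 * (d - 2) * \<sigma> = 0"
    using max_min_quadratic_identity unfolding d_def V_def \<sigma>_def R_def by simp
  moreover have "0 \<le> V" "0 \<le> \<sigma>"
    using remainder_terms_nonneg unfolding V_def \<sigma>_def R_def by simp_all
  ultimately have "d * V = 0" "2 * (d - 2) * \<sigma> = 0"
    using d3 by (simp_all add: add_nonneg_eq_0_iff)
  then show "real (card R) * (\<Sum>k\<in>R. (x k)\<^sup>2) = (\<Sum>k\<in>R. x k)\<^sup>2" "\<sigma> = 0"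
    using d3 unfolding V_def by simp_all
qed

lemma max_plus_min_eq_root_imp_eq_min:
  defines "d \<equiv> real (card A)"
  assumes root: "x i + x j = ((d - 2) * sqrt (d + 1) + 2) / d" and "k \<in> A" "k \<noteq> i"
  shows "x k = x j"
proof (rule ccontr)
  assume "x k \<noteq> x j"
  define R where "R = A - {i, j}"
  have "k \<in> R"
    using assms \<open>x k \<noteq> x j\<close> unfolding R_def by auto
  then have "R \<noteq> {}"
    by auto
  then have d3: "3 \<le> d"
    using three_le_card unfolding d_def R_def by blast
  note vanish = remainder_terms_vanish[OF root[unfolded d_def] \<open>R \<noteq> {}\<close>[unfolded R_def]]
  have "(x k - x j) * (x i - x k) = 0"
    using vanish(2) \<open>k \<in> R\<close> finite bounds
    unfolding R_def by (subst (asm) sum_nonneg_eq_0_iff) auto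
  with \<open>x k \<noteq> x j\<close> have "x k = x i"
    by simp
  have "\<forall>l\<in>R. x l = x i"
    using card_mult_sum_sq_eq_imp_constant[of R x _ k] vanish(1)
      \<open>k \<in> R\<close> \<open>x k = x i\<close> finite unfolding R_def by auto
  then have "(d - 2) * x i = 1 - (x i + x j)"
    using sum_remainder[of "\<lambda>t. t"] sum_eq card_remainder unfolding R_def d_def by simp
  then have "d * ((d - 2) * x i) = d - ((d - 2) * sqrt (d + 1) + 2)"
    unfolding root using d3 by (simp add: field_simps)
  then have "(d - 2) * (d * x i) = (d - 2) * (1 - sqrt (d + 1))"
    by (simp add: algebra_simps)
  then have "d * x i = 1 - sqrt (d + 1)"
    using d3 by simp
  moreover have "1 < sqrt (d + 1)"
    using d3 by simp
  ultimately show False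
    using one_le_card_mult_max unfolding d_def by simp
qed

lemma max_plus_min_eq_root_iff:
  defines "d \<equiv> real (card A)"
  shows "x i + x j = ((d - 2) * sqrt (d + 1) + 2) / d \<longleftrightarrow>
         (\<exists>i'\<in>A. x i' = ((d - 1) * sqrt (d + 1) + 1) / d
                 \<and> (\<forall>k\<in>A - {i'}. x k = (1 - sqrt (d + 1)) / d))"
proof
  assume "x i + x j = ((d - 2) * sqrt (d + 1) + 2) / d"
  then have others: "\<And>k. k \<in> A \<Longrightarrow> k \<noteq> i \<Longrightarrow> x k = x j"
    using max_plus_min_eq_root_imp_eq_min unfolding d_def by blast
  have "x i + (d - 1) * x j = 1" "(x i)\<^sup>2 + (d - 1) * (x j)\<^sup>2 = d"
    using sum_one_exception[OF finite i others, where f = "\<lambda>t. t"]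
      sum_one_exception[OF finite i others, where f = power2] sum_eq sum_sq_eq
    unfolding d_def by simp_all
  moreover have "2 \<le> d" "x j \<le> x i"
    using two_le_card bounds[OF i] unfolding d_def by simp_all
  ultimately have "x i = ((d - 1) * sqrt (d + 1) + 1) / d" "x j = (1 - sqrt (d + 1)) / d"
    using two_valued_solution by blast+
  then show "\<exists>i'\<in>A. x i' = ((d - 1) * sqrt (d + 1) + 1) / d
                 \<and> (\<forall>k\<in>A - {i'}. x k = (1 - sqrt (d + 1)) / d)"
    using i others by auto
next
  assume "\<exists>i'\<in>A. x i' = ((d - 1) * sqrt (d + 1) + 1) / d
                 \<and> (\<forall>k\<in>A - {i'}. x k = (1 - sqrt (d + 1)) / d)"
  then obtain i' where "i' \<in> A" and max: "x i' = ((d - 1) * sqrt (d + 1) + 1) / d"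
    and others: "\<forall>k\<in>A - {i'}. x k = (1 - sqrt (d + 1)) / d"
    by blast
  have "0 < d"
    using two_le_card unfolding d_def by simp
  then have less: "(1 - sqrt (d + 1)) / d < ((d - 1) * sqrt (d + 1) + 1) / d"
    by (simp add: divide_strict_right_mono field_simps)
  have "i' = i"
  proof (rule ccontr)
    assume "i' \<noteq> i"
    then have "x i = (1 - sqrt (d + 1)) / d"
      using others i by simp
    then show False
      using bounds[OF \<open>i' \<in> A\<close>] max less by simp
  qed
  then have "x j = (1 - sqrt (d + 1)) / d"
    using others j \<open>i \<noteq> j\<close> by simp
  then show "x i + x j = ((d - 2) * sqrt (d + 1) + 2) / d"
    using max \<open>i' = i\<close> \<open>0 < d\<close> by (simp add: field_simps)
qed

end

theorem lemmaS1:
  fixes v :: "real ^ 'n"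
  defines "d \<equiv> real CARD('n)"
  defines "vmax \<equiv> Max {v $ j | j. True}"
  defines "vmin \<equiv> Min {v $ j | j. True}"
  defines "n1 \<equiv> (\<Sum>j\<in>UNIV. \<bar>v $ j\<bar>)"
  assumes "CARD('n) \<ge> 2"
    and "(\<Sum>j\<in>UNIV. v $ j) = 1"
    and "(\<Sum>j\<in>UNIV. (v $ j)^2) = d"
  shows "((vmax * (n1 - 1) + \<bar>vmin\<bar> * (n1 + 1)) / 2
           \<ge> d - sqrt (d + 1) + 2 / d * sqrt (d + 1) - 2 / d)
     \<and> ((vmax * (n1 - 1) + \<bar>vmin\<bar> * (n1 + 1)) / 2
           = d - sqrt (d + 1) + 2 / d * sqrt (d + 1) - 2 / d
         \<longleftrightarrow> (\<exists>i. v $ i = ((d - 1) * sqrt (d + 1) + 1) / d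
                  \<and> (\<forall>j. j \<noteq> i \<longrightarrow> v $ j = (1 - sqrt (d + 1)) / d)))"
proof -
  define B where "B = ((d - 2) * sqrt (d + 1) + 2) / d"
  have range_v: "{v $ j | j. True} = range (($) v)"
    by auto
  obtain i j where "i \<noteq> j" and i: "v $ i = vmax" and j: "v $ j = vmin"
    using max_min_indices[of "($) v"] assms unfolding vmax_def vmin_def range_v d_def by blast
  have bounds: "k \<in> UNIV \<Longrightarrow> v $ j \<le> v $ k \<and> v $ k \<le> v $ i" for k
    unfolding i j vmax_def vmin_def range_v by simp
  note normalized = finite[of UNIV] UNIV_I UNIV_I \<open>i \<noteq> j\<close> bounds assms(6) assms(7)[unfolded d_def]
  have lower: "d - (vmax + vmin) \<le> (vmax * (n1 - 1) + \<bar>vmin\<bar> * (n1 + 1)) / 2"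
    using max_min_objective_ge[OF normalized] unfolding i j n1_def d_def .
  have sum_le: "vmax + vmin \<le> B"
    using max_plus_min_le[OF normalized] unfolding i j B_def d_def .
  have attained: "(vmax * (n1 - 1) + \<bar>vmin\<bar> * (n1 + 1)) / 2 = d - B" if "vmax + vmin = B"
    using max_min_objective_eq_if_two_valued[OF normalized] max_plus_min_eq_root_imp_eq_min[OF normalized] that
    unfolding i j n1_def B_def d_def by simp
  have "vmax + vmin = B \<longleftrightarrow> (\<exists>i. v $ i = ((d - 1) * sqrt (d + 1) + 1) / d
                  \<and> (\<forall>j. j \<noteq> i \<longrightarrow> v $ j = (1 - sqrt (d + 1)) / d))"
    using max_plus_min_eq_root_iff[OF normalized] unfolding i j B_def d_def by (simp add: Ball_def)
  moreover have "d - sqrt (d + 1) + 2 / d * sqrt (d + 1) - 2 / d = d - B"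
    using assms(5) unfolding B_def d_def by (simp add: field_simps)
  ultimately show ?thesis
    using lower sum_le attained by fastforce
qed

end
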